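(* Let $X$ be a topological vector space and let $\varphi: X\to\overline{\mathbb{R}}$ be continuous and linear. Then $\varphi$ is finite-valued, i.e. $\varphi(x)\in\mathbb{R}$ for all $x\in X$.
   Context: $\overline{\mathbb{R}}=\mathbb{R}\cup\{-\infty,+\infty\}$ with the order topology (a neighborhood base of $+\infty$ is $\{\{y:y>a\}:a\in\mathbb{R}\}$, of $-\infty$ is $\{\{y:y<a\}:a\in\mathbb{R}\}$). Continuity of $\varphi:X\to\overline{\mathbb{R}}$ is ordinary continuity into this space. $\operatorname{epi}\varphi=\{(x,t)\in X\times\mathbb{R}:\varphi(x)\le t\}$, $\operatorname{hypo}\varphi=\{(x,t)\in X\times\mathbb{R}:\varphi(x)\ge t\}$. A function $\varphi:X\to\overline{\mathbb{R}}$ is called linear if $\operatorname{epi}\varphi$ and $\operatorname{hypo}\varphi$ are convex sets and $\varphi(0)=0$. *)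

theory Defs
  imports "HOL-Analysis.Analysis" "HOL-Library.Extended_Real"
begin

definition tvs :: "'a::{real_vector, topological_space} itself \<Rightarrow> bool" where
  "tvs _ \<longleftrightarrow>
     continuous_on (UNIV :: ('a \<times> 'a) set) (\<lambda>p. fst p + snd p) \<and>
     continuous_on (UNIV :: (real \<times> 'a) set) (\<lambda>p. fst p *\<^sub>R snd p)"

definition epi :: "('a \<Rightarrow> ereal) \<Rightarrow> ('a \<times> real) set" where
  "epi \<phi> = {(x, t). \<phi> x \<le> ereal t}"

definition hypo :: "('a \<Rightarrow> ereal) \<Rightarrow> ('a \<times> real) set" where
  "hypo \<phi> = {(x, t). \<phi> x \<ge> ereal t}"

definition ext_linear :: "('a::real_vector \<Rightarrow> ereal) \<Rightarrow> bool" where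
  "ext_linear \<phi> \<longleftrightarrow> convex (epi \<phi>) \<and> convex (hypo \<phi>) \<and> \<phi> 0 = 0"

end

theory Submission
  imports Defs
begin

text \<open>If \<open>\<phi> x = \<infinity>\<close>, every point above \<open>x\<close> lies in the hypograph; convexity with
  \<open>(0, 0)\<close> spreads this to all of \<open>\<phi> (l *\<^sub>R x)\<close> with \<open>0 < l \<le> 1\<close>, so \<open>\<phi>\<close> is \<open>\<infinity>\<close> on an open
  segment ending at \<open>0\<close>. Continuity along the ray \<open>l \<mapsto> l *\<^sub>R x\<close> then forces
  \<open>\<phi> 0 = \<infinity>\<close>, contradicting \<open>\<phi> 0 = 0\<close>. The case \<open>-\<infinity>\<close> is symmetric with the epigraph.\<close>

lemma tvs_continuous_on_scaleR_left:
  fixes x :: "'a::{real_vector, topological_space}"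
  assumes "tvs TYPE('a)"
  shows "continuous_on UNIV (\<lambda>l::real. l *\<^sub>R x)"
proof -
  have "continuous_on (UNIV :: (real \<times> 'a) set) (\<lambda>p. fst p *\<^sub>R snd p)"
    using assms unfolding tvs_def by blast
  from continuous_on_compose2[OF this continuous_on_Pair[OF continuous_on_id continuous_on_const]]
  show ?thesis by simp
qed

lemma convex_vertical_line_scaleR:
  fixes S :: "('a::real_vector \<times> real) set"
  assumes "convex S" and "(0, 0) \<in> S" and "\<And>s. (x, s) \<in> S" and "0 < l" "l \<le> 1"
  shows "(l *\<^sub>R x, t) \<in> S"
proof -
  have "l *\<^sub>R (x, t / l) + (1 - l) *\<^sub>R (0, 0) \<in> S"
    using assms by (intro convexD) auto
  moreover have "l *\<^sub>R (x, t / l) + (1 - l) *\<^sub>R (0::'a, 0::real) = (l *\<^sub>R x, t)"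
    using \<open>0 < l\<close> by simp
  ultimately show ?thesis by simp
qed

lemma tvs_constant_near_zero_on_ray:
  fixes \<phi> :: "'a::{real_vector, topological_space} \<Rightarrow> 'b::t2_space"
  assumes "tvs TYPE('a)" and "continuous_on UNIV \<phi>"
    and "\<And>l. 0 < l \<Longrightarrow> l < 1 \<Longrightarrow> \<phi> (l *\<^sub>R x) = v"
  shows "\<phi> 0 = v"
proof -
  define g where "g = (\<lambda>l::real. \<phi> (l *\<^sub>R x))"
  have "continuous_on UNIV g"
    unfolding g_def
    using continuous_on_compose2[OF assms(2) tvs_continuous_on_scaleR_left[OF assms(1)]] by simp
  hence "(g \<longlongrightarrow> g 0) (at_right 0)"
    by (simp add: continuous_on_def filterlim_at_split)
  moreover have "eventually (\<lambda>l. g l = v) (at_right 0)"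
    unfolding g_def eventually_at_right_field using assms(3) by (intro exI[of _ 1]) auto
  hence "(g \<longlongrightarrow> v) (at_right 0)"
    using tendsto_eventually by blast
  ultimately have "g 0 = v"
    using tendsto_unique[OF trivial_limit_at_right_real] by blast
  thus ?thesis unfolding g_def by simp
qed

theorem mainTheorem11:
  fixes \<phi> :: "'a::{real_vector, topological_space} \<Rightarrow> ereal"
  assumes "tvs TYPE('a)"
    and "continuous_on UNIV \<phi>"
    and "ext_linear \<phi>"
  shows "\<forall>x. \<phi> x \<noteq> \<infinity> \<and> \<phi> x \<noteq> -\<infinity>"
proof (intro allI conjI notI)
  fix x
  have epi: "convex (epi \<phi>)" and hypo: "convex (hypo \<phi>)" and zero: "\<phi> 0 = 0"
    using assms(3) unfolding ext_linear_def by auto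
  have origin: "(0, 0) \<in> epi \<phi>" "(0, 0) \<in> hypo \<phi>"
    using zero by (simp_all add: epi_def hypo_def)
  show False if "\<phi> x = \<infinity>"
  proof -
    have "\<phi> (l *\<^sub>R x) = \<infinity>" if "0 < l" "l < 1" for l
      using convex_vertical_line_scaleR[OF hypo origin(2), of x l] that \<open>\<phi> x = \<infinity>\<close>
      by (intro ereal_top) (auto simp: hypo_def)
    from tvs_constant_near_zero_on_ray[OF assms(1,2) this] zero show False by simp
  qed
  show False if "\<phi> x = -\<infinity>"
  proof -
    have "\<phi> (l *\<^sub>R x) = -\<infinity>" if "0 < l" "l < 1" for l
      using convex_vertical_line_scaleR[OF epi origin(1), of x l] that \<open>\<phi> x = -\<infinity>\<close>
      by (intro ereal_bot) (auto simp: epi_def)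
    from tvs_constant_near_zero_on_ray[OF assms(1,2) this] zero show False by simp
  qed
qed

end
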